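(* Let $\alpha$ be a nonzero real number. Let $p_1,p_2\in\mathbb S^2$ be two points lying on a common geodesic (great circle) with $N$. (1) If $p_1$ and $p_2$ lie on the same ray starting at $N$, then the piece of this ray joining $p_1$ and $p_2$ minimizes $E_\alpha$ among all curves in $\mathbb S^2$ joining $p_1$ and $p_2$, for every such $\alpha$. (2) Suppose $\alpha>0$. If the minimizing geodesic from $p_1$ to $p_2$ contains $N$, then this geodesic minimizes $E_\alpha$ among all curves in $\mathbb S^2$ joining $p_1$ and $p_2$.
   Context: $\mathbb S^2\subset\mathbb R^3$ is the unit sphere with the Euclidean metric. It is parametrized by $\Psi(u,v)=(\sin u\cos v,\sin u\sin v,\cos u)$, and $N=(0,0,1)$. The spherical distance from $\Psi(u,v)$ to $N$ is $u\in[0,\pi]$. A ray starting at $N$ is a length-minimizing geodesic starting at $N$, i.e. $u\mapsto\Psi(u,v_0)$, $u\in[0,\pi]$, for some fixed $v_0$. For a curve $\gamma$, the energy is $E_\alpha[\gamma]=\int_\gamma\mathsf d^\alpha\,ds$, where $s$ is arc length and $\mathsf d$ is the spherical distance to $N$. In coordinates, $$E_\alpha[\gamma]=\int u^\alpha\sqrt{u'^2+\sin^2(u)v'^2}\,dt.$$ The paper discards the case $\alpha=0$. *)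

theory Defs
  imports "HOL-Analysis.Analysis"
begin

definition Psi :: "real \<Rightarrow> real \<Rightarrow> real^3" where
  "Psi u v = vector [sin u * cos v, sin u * sin v, cos u]"

definition NP :: "real^3" where
  "NP = vector [0, 0, 1]"

definition sdistN :: "real^3 \<Rightarrow> real" where
  "sdistN x = arccos (x \<bullet> NP)"

definition admissible :: "(real \<Rightarrow> real^3) \<Rightarrow> real^3 \<Rightarrow> real^3 \<Rightarrow> bool" where
  "admissible \<gamma> p q \<longleftrightarrow> \<gamma> piecewise_C1_differentiable_on {0..1} \<and>
     \<gamma> ` {0..1} \<subseteq> sphere 0 1 \<and> \<gamma> 0 = p \<and> \<gamma> 1 = q"

definition energy :: "real \<Rightarrow> (real \<Rightarrow> real^3) \<Rightarrow> ennreal" where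
  "energy \<alpha> \<gamma> = (\<integral>\<^sup>+ t. indicator {0..1} t *
      ennreal (sdistN (\<gamma> t) powr \<alpha> * norm (vector_derivative \<gamma> (at t))) \<partial>lborel)"

end

theory Submission
  imports Defs
begin

text \<open>Let \<open>g\<close> be a weight on \<open>[0, pi]\<close> with primitive \<open>G\<close>, and \<open>d\<^sub>P\<close> the spherical
  distance to a point \<open>P\<close>. Since \<open>d\<^sub>P\<close> is 1-Lipschitz on the sphere, \<open>G (d\<^sub>P (\<gamma> t))\<close>
  changes at rate at most \<open>\<bar>g (d\<^sub>P (\<gamma> t))\<bar> * \<bar>\<gamma>' t\<bar>\<close>. Hence, if \<open>\<bar>g (d\<^sub>P x)\<bar> \<le> d\<^sub>N x powr \<alpha>\<close>,
  every curve from \<open>p\<close> to \<open>q\<close> has energy at least \<open>\<bar>G (d\<^sub>P q) - G (d\<^sub>P p)\<bar>\<close>, and this bound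
  is attained by a geodesic along which \<open>d\<^sub>P\<close> grows linearly and \<open>g (d\<^sub>P) = d\<^sub>N powr \<alpha>\<close>.
  For part (1) take \<open>P = N\<close> and \<open>g s = s powr \<alpha>\<close>; for part (2) take \<open>P = p\<^sub>1\<close> and
  \<open>g s = \<bar>s - d\<^sub>N p\<^sub>1\<bar> powr \<alpha>\<close>, which is dominated by \<open>d\<^sub>N powr \<alpha>\<close> by the triangle
  inequality when \<open>\<alpha> > 0\<close>. The weights are first cut off near \<open>\<plusminus>P\<close>, where \<open>d\<^sub>P\<close> is not
  differentiable, and the cut-off is removed by Fatou's lemma.\<close>

section \<open>Spherical geometry\<close>

lemma inner_vec3: "(x::real^3) \<bullet> y = x$1 * y$1 + x$2 * y$2 + x$3 * y$3"
  by (simp add: inner_vec_def sum_3)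

lemma inner_Psi: "Psi u v \<bullet> Psi u' v' = sin u * sin u' * cos (v - v') + cos u * cos u'"
  by (simp add: Psi_def inner_vec3 cos_diff algebra_simps)

lemma inner_Psi_NP: "Psi u v \<bullet> NP = cos u"
  by (simp add: Psi_def NP_def inner_vec3)

lemma inner_Psi_self [simp]: "Psi u v \<bullet> Psi u v = 1"
  using inner_Psi[of u v u v] by (simp flip: power2_eq_square)

lemma norm_Psi [simp]: "norm (Psi u v) = 1"
  by (simp add: norm_eq_sqrt_inner)

lemma norm_NP [simp]: "norm NP = 1"
  by (simp add: norm_eq_sqrt_inner NP_def inner_vec3)

lemma abs_inner_unit_le_1:
  fixes x y :: "'a::real_inner"
  assumes "norm x = 1" "norm y = 1"
  shows "\<bar>x \<bullet> y\<bar> \<le> 1"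
  using Cauchy_Schwarz_ineq2[of x y] assms by simp

lemma arccos_cos_abs: "\<bar>x\<bar> \<le> pi \<Longrightarrow> arccos (cos x) = \<bar>x\<bar>"
  by (metis abs_ge_zero arccos_cos cos_abs_real)

lemma norm_diff_inner_scaleR_unit:
  fixes x y :: "'a::real_inner"
  assumes "norm x = 1" "norm y = 1"
  shows "norm (y - (x \<bullet> y) *\<^sub>R x) = sqrt (1 - (x \<bullet> y)\<^sup>2)"
proof -
  have "x \<bullet> x = 1" "y \<bullet> y = 1" using assms by (simp_all add: norm_eq_sqrt_inner)
  then have "(y - (x \<bullet> y) *\<^sub>R x) \<bullet> (y - (x \<bullet> y) *\<^sub>R x) = 1 - (x \<bullet> y)\<^sup>2"
    by (simp add: inner_diff_left inner_diff_right inner_commute power2_eq_square)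
  then show ?thesis by (simp add: norm_eq_sqrt_inner)
qed

text \<open>Splitting \<open>x\<close> and \<open>z\<close> into their components along \<open>y\<close> and orthogonal to it gives
  \<open>x \<bullet> z \<ge> cos a cos b - sin a sin b = cos (a + b)\<close>.\<close>
lemma arccos_inner_triangle:
  fixes x y z :: "'a::real_inner"
  assumes nx: "norm x = 1" and ny: "norm y = 1" and nz: "norm z = 1"
  shows "arccos (x \<bullet> z) \<le> arccos (x \<bullet> y) + arccos (y \<bullet> z)"
proof -
  define a where "a = arccos (x \<bullet> y)"
  define b where "b = arccos (y \<bullet> z)"
  have bounds: "\<bar>x \<bullet> y\<bar> \<le> 1" "\<bar>y \<bullet> z\<bar> \<le> 1" "\<bar>x \<bullet> z\<bar> \<le> 1"
    using abs_inner_unit_le_1 assms by blast+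
  have a: "0 \<le> a" "a \<le> pi" "cos a = x \<bullet> y" "sin a = sqrt (1 - (x \<bullet> y)\<^sup>2)"
    using bounds by (auto simp: a_def arccos_lbound arccos_ubound sin_arccos abs_le_iff)
  have b: "0 \<le> b" "b \<le> pi" "cos b = y \<bullet> z" "sin b = sqrt (1 - (y \<bullet> z)\<^sup>2)"
    using bounds by (auto simp: b_def arccos_lbound arccos_ubound sin_arccos abs_le_iff)
  show ?thesis
  proof (cases "a + b \<le> pi")
    case False
    then show ?thesis
      using arccos_ubound[of "x \<bullet> z"] bounds by (simp add: a_def b_def abs_le_iff)
  next
    case True
    define x' where "x' = x - (y \<bullet> x) *\<^sub>R y"
    define z' where "z' = z - (y \<bullet> z) *\<^sub>R y"
    have "y \<bullet> y = 1" using ny by (simp add: norm_eq_sqrt_inner)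
    then have split: "x \<bullet> z = cos a * cos b + x' \<bullet> z'"
      by (simp add: a b x'_def z'_def inner_diff_left inner_diff_right inner_commute algebra_simps)
    have "- (norm x' * norm z') \<le> x' \<bullet> z'"
      using Cauchy_Schwarz_ineq2[of x' z'] by linarith
    moreover have "norm x' * norm z' = sin a * sin b"
      using norm_diff_inner_scaleR_unit[OF ny nx] norm_diff_inner_scaleR_unit[OF ny nz]
      by (simp add: a b x'_def z'_def inner_commute)
    ultimately have "cos (a + b) \<le> x \<bullet> z"
      by (simp add: split cos_add)
    then have "arccos (x \<bullet> z) \<le> arccos (cos (a + b))"
      using bounds by (intro arccos_le_arccos) (auto simp: abs_le_iff)
    also have "\<dots> = a + b" using True a b by (simp add: arccos_cos)
    finally show ?thesis by (simp add: a_def b_def)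
  qed
qed

lemma vector_derivative_orthogonal_on_sphere:
  fixes \<gamma> :: "real \<Rightarrow> 'a::real_inner"
  assumes \<gamma>': "(\<gamma> has_vector_derivative D) (at t)"
    and S: "open S" "t \<in> S" and unit: "\<And>s. s \<in> S \<Longrightarrow> norm (\<gamma> s) = 1"
  shows "D \<bullet> \<gamma> t = 0"
proof -
  have "((\<lambda>s. \<gamma> s \<bullet> \<gamma> s) has_derivative (\<lambda>h. \<gamma> t \<bullet> (h *\<^sub>R D) + (h *\<^sub>R D) \<bullet> \<gamma> t)) (at t)"
    using \<gamma>' by (intro has_derivative_inner) (auto simp: has_vector_derivative_def)
  then have "((\<lambda>s. \<gamma> s \<bullet> \<gamma> s) has_real_derivative 2 * (D \<bullet> \<gamma> t)) (at t)"
    unfolding has_field_derivative_def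
    by (rule has_derivative_eq_rhs) (auto simp: fun_eq_iff inner_commute algebra_simps)
  moreover have "((\<lambda>s. \<gamma> s \<bullet> \<gamma> s) has_real_derivative 0) (at t)"
    by (rule has_field_derivative_transform_within_open[of "\<lambda>_. 1" _ _ S])
       (use S unit in \<open>auto simp: norm_eq_sqrt_inner\<close>)
  ultimately show ?thesis using DERIV_unique by force
qed

lemma abs_inner_tangent_le:
  fixes x P D :: "'a::real_inner"
  assumes "norm x = 1" "norm P = 1" "D \<bullet> x = 0"
  shows "\<bar>D \<bullet> P\<bar> \<le> norm D * sqrt (1 - (x \<bullet> P)\<^sup>2)"
proof -
  have "D \<bullet> P = D \<bullet> (P - (x \<bullet> P) *\<^sub>R x)"
    using assms(3) by (simp add: inner_diff_right)
  then show ?thesis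
    using Cauchy_Schwarz_ineq2[of D "P - (x \<bullet> P) *\<^sub>R x"] norm_diff_inner_scaleR_unit[OF assms(1,2)]
    by simp
qed

section \<open>Integration lemmas\<close>

lemma has_integral_le_nn_integral:
  fixes k f :: "'a::euclidean_space \<Rightarrow> real"
  assumes k: "(k has_integral I) S"
    and le: "AE x in lborel. x \<in> S \<longrightarrow> k x \<le> f x"
    and f_nonneg: "\<And>x. 0 \<le> f x"
  shows "ennreal I \<le> (\<integral>\<^sup>+ x. indicator S x * ennreal (f x) \<partial>lborel)"
proof -
  define m where "m x = k x * indicator S x" for x
  have "m \<in> borel_measurable (completion lborel)"
    unfolding m_def by (rule has_integral_implies_lebesgue_measurable_real[OF k])
  from completion_ex_borel_measurable_real[OF this]
  obtain m' where m'[measurable]: "m' \<in> borel_measurable lborel"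
    and ae: "AE x in lborel. m x = m' x"
    by blast
  have "m = (\<lambda>x. if x \<in> S then k x else 0)"
    by (auto simp: m_def)
  then have "(m has_integral I) UNIV"
    using has_integral_restrict_UNIV[THEN iffD2, OF k] by simp
  then have m'_integral: "(m' has_integral I) UNIV"
    using ae by (subst has_integral_AE[symmetric]) (auto elim: AE_mp)
  define q where "q x = max (m' x) 0" for x
  have [measurable]: "q \<in> borel_measurable borel" unfolding q_def by measurable
  have q_le: "(\<integral>\<^sup>+ x. ennreal (q x) \<partial>lborel) \<le> (\<integral>\<^sup>+ x. indicator S x * ennreal (f x) \<partial>lborel)"
    using ae le
    by (intro nn_integral_mono_AE, eventually_elim)
       (auto simp: q_def m_def indicator_def f_nonneg ennreal_leI)
  show ?thesis
  proof (cases "(\<integral>\<^sup>+ x. ennreal (q x) \<partial>lborel)" rule: ennreal_cases)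
    case (real r)
    have "(q has_integral r) UNIV"
      by (rule nn_integral_has_integral) (use real in \<open>auto simp: q_def\<close>)
    then have "I \<le> r"
      by (rule has_integral_le[OF m'_integral]) (auto simp: q_def)
    then show ?thesis using q_le real by (metis ennreal_leI order_trans)
  qed (use q_le in \<open>simp add: top_unique\<close>)
qed

lemma has_integral_abs_le_nn_integral:
  fixes k f :: "'a::euclidean_space \<Rightarrow> real"
  assumes k: "(k has_integral I) S"
    and le: "AE x in lborel. x \<in> S \<longrightarrow> \<bar>k x\<bar> \<le> f x"
    and f_nonneg: "\<And>x. 0 \<le> f x"
  shows "ennreal \<bar>I\<bar> \<le> (\<integral>\<^sup>+ x. indicator S x * ennreal (f x) \<partial>lborel)"
proof -
  have "ennreal I \<le> (\<integral>\<^sup>+ x. indicator S x * ennreal (f x) \<partial>lborel)"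
    by (rule has_integral_le_nn_integral[OF k _ f_nonneg]) (use le in \<open>auto elim: AE_mp\<close>)
  moreover have "ennreal (- I) \<le> (\<integral>\<^sup>+ x. indicator S x * ennreal (f x) \<partial>lborel)"
    by (rule has_integral_le_nn_integral[OF has_integral_neg[OF k] _ f_nonneg])
       (use le in \<open>auto elim: AE_mp\<close>)
  ultimately show ?thesis by (cases "0 \<le> I") auto
qed

lemma nn_integral_le_of_eventually_eq:
  fixes f :: "nat \<Rightarrow> 'a \<Rightarrow> ennreal"
  assumes f: "\<And>n. f n \<in> borel_measurable M"
    and lim: "AE x in M. eventually (\<lambda>n. f n x = g x) sequentially"
    and le: "\<And>n. integral\<^sup>N M (f n) \<le> E"
  shows "integral\<^sup>N M g \<le> E"
proof -
  have "AE x in M. g x = liminf (\<lambda>n. f n x)"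
    using lim by eventually_elim
      (metis lim_imp_Liminf tendsto_eventually trivial_limit_sequentially)
  then have "integral\<^sup>N M g = (\<integral>\<^sup>+ x. liminf (\<lambda>n. f n x) \<partial>M)"
    by (rule nn_integral_cong_AE)
  also have "\<dots> \<le> liminf (\<lambda>n. integral\<^sup>N M (f n))"
    by (rule nn_integral_liminf[OF f])
  also have "\<dots> \<le> E"
    using le by (intro Liminf_le) auto
  finally show ?thesis .
qed

lemma segment_mem_atLeastAtMost:
  fixes a b c d t :: real
  assumes "t \<in> {0..1}" "a \<in> {c..d}" "b \<in> {c..d}"
  shows "a + t * (b - a) \<in> {c..d}"
proof -
  have "t * c \<le> t * b" "t * b \<le> t * d" "(1 - t) * c \<le> (1 - t) * a" "(1 - t) * a \<le> (1 - t) * d"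
    using assms by (auto intro: mult_left_mono)
  then show ?thesis by (auto simp: algebra_simps)
qed

lemma segment_mem_greaterThanLessThan:
  fixes a b c d t :: real
  assumes "t \<in> {0<..<1}" "a \<in> {c..d}" "b \<in> {c..d}" "a \<noteq> b"
  shows "a + t * (b - a) \<in> {c<..<d}"
proof -
  have "a + t * (b - a) - a = t * (b - a)" "b - (a + t * (b - a)) = (1 - t) * (b - a)"
    by (simp_all add: algebra_simps)
  moreover have "0 < t * (b - a) \<and> 0 < (1 - t) * (b - a) \<or> t * (b - a) < 0 \<and> (1 - t) * (b - a) < 0"
    using assms by (cases "a < b") (auto simp: mult_pos_neg)
  ultimately show ?thesis using assms by auto
qed

section \<open>Calibration by a primitive of the distance to a point\<close>

definition cutoff :: "nat \<Rightarrow> real \<Rightarrow> real" where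
  "cutoff n s = max 0 (min 1 (real (Suc n) * min s (pi - s) - 1))"

lemma cutoff_nonneg: "0 \<le> cutoff n s" and cutoff_le_1: "cutoff n s \<le> 1"
  by (auto simp: cutoff_def)

lemma continuous_cutoff: "continuous_on UNIV (cutoff n)"
  unfolding cutoff_def by (intro continuous_intros)

lemma cutoff_eq_0:
  assumes "min s (pi - s) \<le> 1 / real (Suc n)"
  shows "cutoff n s = 0"
proof -
  have "real (Suc n) * min s (pi - s) \<le> 1"
    using assms by (simp add: field_simps del: of_nat_Suc)
  then show ?thesis by (simp add: cutoff_def)
qed

lemma cutoff_eq_0_outside:
  assumes "s \<notin> {0<..<pi}"
  shows "cutoff n s = 0"
proof (rule cutoff_eq_0)
  have "min s (pi - s) \<le> 0" using assms by auto
  then show "min s (pi - s) \<le> 1 / real (Suc n)" by (rule order_trans) simp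
qed

lemma eventually_cutoff_eq_1:
  assumes "s \<in> {0<..<pi}"
  shows "eventually (\<lambda>n. cutoff n s = 1) sequentially"
proof -
  define m where "m = min s (pi - s)"
  have m: "0 < m" using assms by (simp add: m_def)
  obtain N :: nat where "2 / m < real N"
    using reals_Archimedean2 by blast
  then have N: "2 < real N * m" using m by (simp add: field_simps)
  have "2 \<le> real (Suc n) * m" if "N \<le> n" for n
  proof -
    have "real N * m \<le> real (Suc n) * m"
      using that m by (intro mult_right_mono) auto
    then show ?thesis using N by linarith
  qed
  then show ?thesis
    unfolding eventually_sequentially cutoff_def m_def[symmetric] by (auto intro: exI[of _ N])
qed

locale weight_vanishing_at_poles =
  fixes g :: "real \<Rightarrow> real" and \<delta> :: real
  assumes continuous_g: "continuous_on UNIV g"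
    and \<delta>_pos: "0 < \<delta>"
    and g_eq_0_low: "\<And>s. s \<in> {0..\<delta>} \<Longrightarrow> g s = 0"
    and g_eq_0_high: "\<And>s. s \<in> {pi - \<delta>..pi} \<Longrightarrow> g s = 0"
begin

definition G :: "real \<Rightarrow> real" where
  "G s = integral {0..s} g"

text \<open>\<open>H z = G (arccos z)\<close> on \<open>{-1..1}\<close>, extended constantly beyond, where \<open>arccos\<close> is junk;
  since \<open>g\<close> vanishes near \<open>0\<close> and \<open>pi\<close>, \<open>H\<close> is differentiable everywhere.\<close>
definition H :: "real \<Rightarrow> real" where
  "H z = G (arccos (max (-1) (min 1 z)))"

definition H' :: "real \<Rightarrow> real" where
  "H' z = (if \<bar>z\<bar> < 1 then - g (arccos z) / sqrt (1 - z\<^sup>2) else 0)"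

lemma integrable_g: "g integrable_on {a..b}"
  using continuous_g continuous_on_subset integrable_continuous_real by blast

lemma G_has_derivative:
  assumes "s \<in> {0<..<pi}"
  shows "(G has_real_derivative g s) (at s)"
proof -
  have "(G has_real_derivative g s) (at s within {0..pi})"
    unfolding G_def
    by (rule integral_has_real_derivative) (use assms continuous_g continuous_on_subset in auto)
  moreover have "at s within {0..pi} = at s"
    by (rule at_within_interior) (use assms in auto)
  ultimately show ?thesis by simp
qed

lemma continuous_on_G: "continuous_on {0..pi} G"
  unfolding G_def by (rule indefinite_integral_continuous_1) (rule integrable_g)

lemma G_eq_0: "s \<in> {0..\<delta>} \<Longrightarrow> G s = 0"
  unfolding G_def using integral_cong[of "{0..s}" g "\<lambda>_. 0"] g_eq_0_low by auto

lemma G_eq_G_pi: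
  assumes "s \<in> {pi - \<delta>..pi}" "0 \<le> s"
  shows "G s = G pi"
proof -
  have "integral {0..s} g + integral {s..pi} g = integral {0..pi} g"
    using Henstock_Kurzweil_Integration.integral_combine[where a=0 and c=s and b=pi and f=g]
      assms integrable_g by auto
  moreover have "integral {s..pi} g = 0"
    using integral_cong[of "{s..pi}" g "\<lambda>_. 0"] g_eq_0_high assms by auto
  ultimately show ?thesis by (simp add: G_def)
qed

lemma H_eq_0: "cos (min \<delta> pi) < z \<Longrightarrow> H z = 0"
proof -
  assume z: "cos (min \<delta> pi) < z"
  define y where "y = max (-1) (min 1 z)"
  have y: "-1 \<le> y" "cos (min \<delta> pi) \<le> y" "y \<le> 1"
    using z cos_le_one[of "min \<delta> pi"] by (auto simp: y_def max_def min_def)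
  have "arccos y \<le> arccos (cos (min \<delta> pi))"
    using y by (intro arccos_le_arccos) auto
  also have "\<dots> = min \<delta> pi" using \<delta>_pos by (intro arccos_cos) auto
  finally have "arccos y \<in> {0..\<delta>}"
    using arccos_lbound[of y] y by auto
  then show ?thesis
    using G_eq_0 by (simp add: H_def y_def[symmetric])
qed

lemma H_eq_G_pi: "z < - cos (min \<delta> pi) \<Longrightarrow> H z = G pi"
proof -
  assume z: "z < - cos (min \<delta> pi)"
  define y where "y = max (-1) (min 1 z)"
  have y: "-1 \<le> y" "y \<le> 1" "y \<le> cos (pi - min \<delta> pi)"
    using z cos_ge_minus_one[of "min \<delta> pi"] by (auto simp: y_def)
  have "pi - min \<delta> pi = arccos (cos (pi - min \<delta> pi))"
    using \<delta>_pos by (intro arccos_cos[symmetric]) auto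
  also have "\<dots> \<le> arccos y"
    using y by (intro arccos_le_arccos) auto
  finally have "arccos y \<in> {pi - \<delta>..pi}"
    using arccos_ubound[of y] y by auto
  then show ?thesis
    using arccos_lbound[of y] y G_eq_G_pi[of "arccos y"] by (simp add: H_def y_def[symmetric])
qed

lemma H_has_derivative: "(H has_real_derivative H' z) (at z)"
proof -
  have cos_lt_1: "cos (min \<delta> pi) < 1"
    using \<delta>_pos cos_monotone_0_pi[of 0 "min \<delta> pi"] by auto
  consider "\<bar>z\<bar> < 1" | "1 \<le> z" | "z \<le> -1" by linarith
  then show ?thesis
  proof cases
    case 1
    then have z: "-1 < z" "z < 1" by auto
    have "arccos z \<in> {0<..<pi}" using z arccos_lt_bounded[of z] by auto
    from DERIV_chain2[OF G_has_derivative[OF this] DERIV_arccos[OF z]]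
    have "((\<lambda>y. G (arccos y)) has_real_derivative H' z) (at z)"
      using 1 by (simp add: H'_def divide_simps)
    then show ?thesis
      by (rule has_field_derivative_transform_within_open[of _ _ z "{-1<..<1}"])
         (use z in \<open>auto simp: H_def\<close>)
  next
    case 2
    have "(H has_real_derivative 0) (at z)"
      by (rule has_field_derivative_transform_within_open[of "\<lambda>_. 0" _ _ "{cos (min \<delta> pi)<..}"])
         (use 2 cos_lt_1 H_eq_0 in auto)
    then show ?thesis using 2 by (simp add: H'_def)
  next
    case 3
    have "(H has_real_derivative 0) (at z)"
      by (rule has_field_derivative_transform_within_open[of "\<lambda>_. G pi" _ _ "{..< - cos (min \<delta> pi)}"])
         (use 3 cos_lt_1 H_eq_G_pi in auto)
    then show ?thesis using 3 by (simp add: H'_def)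
  qed
qed

lemma H_inner_has_vector_derivative:
  fixes \<gamma> :: "real \<Rightarrow> 'a::real_inner"
  assumes "(\<gamma> has_vector_derivative D) (at t)"
  shows "((\<lambda>s. H (\<gamma> s \<bullet> P)) has_vector_derivative H' (\<gamma> t \<bullet> P) * (D \<bullet> P)) (at t)"
proof -
  have "(\<gamma> has_derivative (\<lambda>r. r *\<^sub>R D)) (at t)"
    using assms by (simp add: has_vector_derivative_def)
  from bounded_linear.has_derivative[OF bounded_linear_inner_left this]
  have "((\<lambda>s. \<gamma> s \<bullet> P) has_derivative (\<lambda>r. (r *\<^sub>R D) \<bullet> P)) (at t)" .
  then have "((\<lambda>s. \<gamma> s \<bullet> P) has_real_derivative D \<bullet> P) (at t)"
    unfolding has_field_derivative_def by (rule has_derivative_eq_rhs) (auto simp: fun_eq_iff)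
  from DERIV_chain2[OF H_has_derivative this] show ?thesis
    by (simp add: has_real_derivative_iff_has_vector_derivative)
qed

text \<open>This is where the 1-Lipschitz property of the spherical distance to \<open>P\<close> enters.\<close>
lemma abs_H'_inner_le:
  fixes x P D :: "'a::real_inner"
  assumes "norm x = 1" "norm P = 1" "D \<bullet> x = 0"
  shows "\<bar>H' (x \<bullet> P) * (D \<bullet> P)\<bar> \<le> \<bar>g (arccos (x \<bullet> P))\<bar> * norm D"
proof (cases "\<bar>x \<bullet> P\<bar> < 1")
  case True
  define r where "r = sqrt (1 - (x \<bullet> P)\<^sup>2)"
  have r: "0 < r" using True by (simp add: r_def abs_square_less_1)
  have "\<bar>H' (x \<bullet> P) * (D \<bullet> P)\<bar> = \<bar>g (arccos (x \<bullet> P))\<bar> / r * \<bar>D \<bullet> P\<bar>"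
    using True r by (simp add: H'_def r_def abs_mult)
  also have "\<dots> \<le> \<bar>g (arccos (x \<bullet> P))\<bar> / r * (norm D * r)"
    using abs_inner_tangent_le[OF assms] r by (intro mult_left_mono) (simp_all add: r_def)
  also have "\<dots> = \<bar>g (arccos (x \<bullet> P))\<bar> * norm D"
    using r by simp
  finally show ?thesis .
qed (simp add: H'_def)

lemma G_arccos_diff_le_energy:
  fixes \<gamma> :: "real \<Rightarrow> real^3" and P :: "real^3"
  assumes adm: "admissible \<gamma> p q" and P: "norm P = 1"
    and bound: "\<And>x. norm x = 1 \<Longrightarrow> \<bar>g (arccos (x \<bullet> P))\<bar> \<le> sdistN x powr \<alpha>"
  shows "ennreal \<bar>G (arccos (q \<bullet> P)) - G (arccos (p \<bullet> P))\<bar> \<le> energy \<alpha> \<gamma>"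
proof -
  obtain S where S: "finite S" and C1: "\<gamma> C1_differentiable_on {0..1} - S"
    and continuous_\<gamma>: "continuous_on {0..1} \<gamma>"
    using adm unfolding admissible_def piecewise_C1_differentiable_on_def by blast
  obtain D where D: "\<And>t. t \<in> {0..1} - S \<Longrightarrow> (\<gamma> has_vector_derivative D t) (at t)"
    using C1 unfolding C1_differentiable_on_def by blast
  have unit: "norm (\<gamma> t) = 1" if "t \<in> {0..1}" for t
    using adm that by (auto simp: admissible_def image_subset_iff)
  define h where "h = (\<lambda>t. H (\<gamma> t \<bullet> P))"
  define h' where "h' t = H' (\<gamma> t \<bullet> P) * (D t \<bullet> P)" for t
  have h_eq: "h t = G (arccos (\<gamma> t \<bullet> P))" if "t \<in> {0..1}" for t
    using abs_inner_unit_le_1[OF unit[OF that] P] by (simp add: h_def H_def abs_le_iff)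
  have h_derivative: "(h has_vector_derivative h' t) (at t)" if "t \<in> {0<..<1} - S" for t
    using D that unfolding h_def h'_def by (intro H_inner_has_vector_derivative) auto
  have "continuous_on UNIV H"
    using H_has_derivative by (meson DERIV_isCont continuous_at_imp_continuous_on)
  then have "continuous_on {0..1} h"
    unfolding h_def by (rule continuous_on_compose2) (auto intro!: continuous_intros continuous_\<gamma>)
  then have ftc: "(h' has_integral h 1 - h 0) {0..1}"
    using h_derivative by (intro fundamental_theorem_of_calculus_interior_strong[OF S]) auto
  have h'_le: "\<bar>h' t\<bar> \<le> sdistN (\<gamma> t) powr \<alpha> * norm (vector_derivative \<gamma> (at t))"
    if t: "t \<in> {0<..<1} - S" for t
  proof -
    have "open ({0<..<1} - S)" using S by (simp add: open_Diff finite_imp_closed)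
    then have "D t \<bullet> \<gamma> t = 0"
      using D t unit by (intro vector_derivative_orthogonal_on_sphere[of \<gamma> _ t "{0<..<1} - S"]) auto
    then have "\<bar>h' t\<bar> \<le> \<bar>g (arccos (\<gamma> t \<bullet> P))\<bar> * norm (D t)"
      unfolding h'_def using unit t P by (intro abs_H'_inner_le) auto
    also have "\<dots> \<le> sdistN (\<gamma> t) powr \<alpha> * norm (D t)"
      using unit t bound by (intro mult_right_mono) auto
    also have "D t = vector_derivative \<gamma> (at t)"
      using D t by (auto intro: vector_derivative_at[symmetric])
    finally show ?thesis .
  qed
  have "AE t in lborel. t \<notin> S \<union> {0, 1}"
    using S by (intro AE_not_in finite_imp_null_set_lborel) auto
  then have "ennreal \<bar>h 1 - h 0\<bar> \<le> energy \<alpha> \<gamma>"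
    unfolding energy_def using h'_le
    by (intro has_integral_abs_le_nn_integral[OF ftc]) (auto elim!: AE_mp)
  then show ?thesis
    using adm by (simp add: h_eq admissible_def)
qed

lemma nn_integral_segment_eq_G_diff:
  assumes a: "a \<in> {0..pi}" and b: "b \<in> {0..pi}" and g_nonneg: "\<And>s. s \<in> {0..pi} \<Longrightarrow> 0 \<le> g s"
  shows "(\<integral>\<^sup>+ t. indicator {0..1} t * ennreal (g (a + t * (b - a)) * \<bar>b - a\<bar>) \<partial>lborel)
    = ennreal \<bar>G b - G a\<bar>"
proof (cases "a = b")
  case False
  define p where "p t = a + t * (b - a)" for t
  have "((\<lambda>t. G (p t)) has_vector_derivative g (p t) * (b - a)) (at t)" if "t \<in> {0<..<1}" for t
  proof -
    have "(p has_real_derivative b - a) (at t)"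
      unfolding p_def by (auto intro!: derivative_eq_intros)
    moreover have "(G has_real_derivative g (p t)) (at (p t))"
      using G_has_derivative segment_mem_greaterThanLessThan[OF that a b False] by (simp add: p_def)
    ultimately show ?thesis
      by (simp add: DERIV_chain2 flip: has_real_derivative_iff_has_vector_derivative)
  qed
  moreover have "continuous_on {0..1} (\<lambda>t. G (p t))"
    using segment_mem_atLeastAtMost[OF _ a b]
    by (intro continuous_on_compose2[OF continuous_on_G]) (auto simp: p_def intro!: continuous_intros)
  ultimately have "((\<lambda>t. g (p t) * (b - a)) has_integral G b - G a) {0..1}"
    using fundamental_theorem_of_calculus_interior_strong[of "{}" 0 1 "\<lambda>t. G (p t)"]
    by (simp add: p_def)
  from has_integral_mult_left[OF this, of "sgn (b - a)"]
  have integral: "((\<lambda>t. g (p t) * \<bar>b - a\<bar>) has_integral sgn (b - a) * (G b - G a)) {0..1}"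
    by (simp add: abs_sgn algebra_simps)
  have nonneg: "0 \<le> g (p t) * \<bar>b - a\<bar>" if "t \<in> {0..1}" for t
    using g_nonneg segment_mem_atLeastAtMost[OF that a b] by (simp add: p_def)
  have "sgn (b - a) * (G b - G a) = \<bar>G b - G a\<bar>"
    using has_integral_nonneg[OF integral nonneg] False
    by (auto simp: abs_if sgn_if split: if_splits)
  then show ?thesis
    using nn_integral_has_integral_lebesgue'[OF nonneg integral]
    by (simp add: p_def mult.commute)
qed simp

end

lemma cutoff_weight_vanishing_at_poles:
  assumes "continuous_on {0<..<pi} w"
  shows "weight_vanishing_at_poles (\<lambda>s. cutoff n s * w s) (1 / real (Suc n))"
proof
  define \<delta> where "\<delta> = 1 / real (Suc n)"
  have vanish: "cutoff n s = 0" if "s \<le> \<delta> \<or> pi - \<delta> \<le> s" for s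
    using that cutoff_eq_0[of s n] by (auto simp: \<delta>_def)
  have "continuous_on {0<..<pi} (\<lambda>s. cutoff n s * w s)"
    using assms continuous_cutoff continuous_on_subset by (blast intro: continuous_on_mult)
  moreover have "continuous_on ({..<\<delta>} \<union> {pi - \<delta><..}) (\<lambda>s. cutoff n s * w s)"
    using vanish by (subst continuous_on_cong[OF refl, of _ _ "\<lambda>_. 0"]) auto
  moreover have "0 < \<delta>" by (simp add: \<delta>_def)
  then have "{0<..<pi} \<union> ({..<\<delta>} \<union> {pi - \<delta><..}) = UNIV"
    by auto
  ultimately show "continuous_on UNIV (\<lambda>s. cutoff n s * w s)"
    by (metis continuous_on_open_Un open_Un open_greaterThan open_greaterThanLessThan open_lessThan)
  show "0 < 1 / real (Suc n)" by simp
  show "cutoff n s * w s = 0" if "s \<in> {0..1 / real (Suc n)}" for s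
    using that vanish by (auto simp: \<delta>_def)
  show "cutoff n s * w s = 0" if "s \<in> {pi - 1 / real (Suc n)..pi}" for s
    using that vanish by (auto simp: \<delta>_def)
qed

lemma cutoff_segment_weight_le_energy:
  fixes w :: "real \<Rightarrow> real" and P :: "real^3"
  assumes w_cont: "continuous_on {0<..<pi} w" and w_nonneg: "\<And>s. 0 \<le> w s"
    and P: "norm P = 1"
    and w_le: "\<And>x. norm x = 1 \<Longrightarrow> arccos (x \<bullet> P) \<in> {0<..<pi} \<Longrightarrow>
      w (arccos (x \<bullet> P)) \<le> sdistN x powr \<alpha>"
    and adm: "admissible \<gamma> p q"
    and a: "arccos (p \<bullet> P) = a" and b: "arccos (q \<bullet> P) = b"
  shows "(\<integral>\<^sup>+ t. indicator {0..1} t *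
      ennreal (cutoff n (a + t * (b - a)) * w (a + t * (b - a)) * \<bar>b - a\<bar>) \<partial>lborel)
    \<le> energy \<alpha> \<gamma>"
proof -
  interpret weight_vanishing_at_poles "\<lambda>s. cutoff n s * w s" "1 / real (Suc n)"
    using w_cont by (rule cutoff_weight_vanishing_at_poles)
  have "norm p = 1" "norm q = 1"
    using adm by (auto simp: admissible_def image_subset_iff)
  then have ab: "a \<in> {0..pi}" "b \<in> {0..pi}"
    using a b abs_inner_unit_le_1[OF _ P] arccos_lbound arccos_ubound by (auto simp: abs_le_iff)
  have "\<bar>cutoff n (arccos (x \<bullet> P)) * w (arccos (x \<bullet> P))\<bar> \<le> sdistN x powr \<alpha>"
    if "norm x = 1" for x
  proof (cases "arccos (x \<bullet> P) \<in> {0<..<pi}")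
    case True
    have "\<bar>cutoff n (arccos (x \<bullet> P)) * w (arccos (x \<bullet> P))\<bar> \<le> w (arccos (x \<bullet> P))"
      using cutoff_nonneg cutoff_le_1 w_nonneg by (simp add: abs_mult mult_left_le_one_le)
    also have "\<dots> \<le> sdistN x powr \<alpha>"
      using w_le that True by blast
    finally show ?thesis .
  qed (simp add: cutoff_eq_0_outside)
  then have "ennreal \<bar>G b - G a\<bar> \<le> energy \<alpha> \<gamma>"
    using G_arccos_diff_le_energy[OF adm P] a b by simp
  then show ?thesis
    using nn_integral_segment_eq_G_diff[OF ab] w_nonneg cutoff_nonneg by simp
qed

text \<open>Fatou's lemma removes the cut-off.\<close>
lemma segment_weight_le_energy:
  fixes w :: "real \<Rightarrow> real" and P :: "real^3"
  assumes w_cont: "continuous_on {0<..<pi} w" and w_nonneg: "\<And>s. 0 \<le> w s"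
    and P: "norm P = 1"
    and w_le: "\<And>x. norm x = 1 \<Longrightarrow> arccos (x \<bullet> P) \<in> {0<..<pi} \<Longrightarrow>
      w (arccos (x \<bullet> P)) \<le> sdistN x powr \<alpha>"
    and adm: "admissible \<gamma> p q"
    and a: "arccos (p \<bullet> P) = a" and b: "arccos (q \<bullet> P) = b"
  shows "(\<integral>\<^sup>+ t. indicator {0..1} t * ennreal (w (a + t * (b - a)) * \<bar>b - a\<bar>) \<partial>lborel)
    \<le> energy \<alpha> \<gamma>"
proof -
  have "norm p = 1" "norm q = 1"
    using adm by (auto simp: admissible_def image_subset_iff)
  then have ab: "a \<in> {0..pi}" "b \<in> {0..pi}"
    using a b abs_inner_unit_le_1[OF _ P] arccos_lbound arccos_ubound by (auto simp: abs_le_iff)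
  define f where "f n t = indicator {0..1} t *
    ennreal (cutoff n (a + t * (b - a)) * w (a + t * (b - a)) * \<bar>b - a\<bar>)" for n t
  have "f n \<in> borel_measurable lborel" for n
  proof -
    have "continuous_on UNIV (\<lambda>s. cutoff n s * w s)"
      by (rule weight_vanishing_at_poles.continuous_g[OF cutoff_weight_vanishing_at_poles[OF w_cont]])
    then have "continuous_on UNIV (\<lambda>t. cutoff n (a + t * (b - a)) * w (a + t * (b - a)))"
      by (rule continuous_on_compose2) (auto intro!: continuous_intros)
    then have [measurable]:
      "(\<lambda>t. cutoff n (a + t * (b - a)) * w (a + t * (b - a))) \<in> borel_measurable borel"
      by (rule borel_measurable_continuous_onI)
    show ?thesis unfolding f_def by measurable
  qed
  moreover have "AE t in lborel. eventually (\<lambda>n. f n t =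
    indicator {0..1} t * ennreal (w (a + t * (b - a)) * \<bar>b - a\<bar>)) sequentially"
    using AE_lborel_singleton[of 0] AE_lborel_singleton[of 1]
  proof eventually_elim
    case (elim t)
    show ?case
    proof (cases "t \<in> {0<..<1} \<and> a \<noteq> b")
      case True
      then have "a + t * (b - a) \<in> {0<..<pi}"
        using segment_mem_greaterThanLessThan ab by blast
      then show ?thesis
        by (rule eventually_mono[OF eventually_cutoff_eq_1]) (simp add: f_def)
    qed (use elim in \<open>auto simp: f_def\<close>)
  qed
  moreover have "integral\<^sup>N lborel (f n) \<le> energy \<alpha> \<gamma>" for n
    unfolding f_def using assms by (rule cutoff_segment_weight_le_energy)
  ultimately show ?thesis
    by (rule nn_integral_le_of_eventually_eq)
qed

section \<open>Energy of the geodesic segments\<close>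

lemma vector3_eq_axis_sum:
  "(vector [x, y, z] :: real^3) = x *\<^sub>R axis 1 1 + y *\<^sub>R axis 2 1 + z *\<^sub>R axis 3 1"
  by (simp add: vec_eq_iff forall_3 axis_def)

lemma norm_vector_derivative_Psi_segment:
  "norm (vector_derivative (\<lambda>t. Psi (a + t * c) v) (at t)) = \<bar>c\<bar>"
proof -
  define u where "u = a + t * c"
  have "((\<lambda>t. Psi (a + t * c) v) has_vector_derivative
      vector [c * cos u * cos v, c * cos u * sin v, - c * sin u]) (at t)"
    unfolding Psi_def vector3_eq_axis_sum u_def
    by (auto intro!: derivative_eq_intros simp: algebra_simps)
  then have "vector_derivative (\<lambda>t. Psi (a + t * c) v) (at t) =
      vector [c * cos u * cos v, c * cos u * sin v, - c * sin u]"
    by (rule vector_derivative_at)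
  moreover have "(c * cos u * cos v)\<^sup>2 + (c * cos u * sin v)\<^sup>2 + (c * sin u)\<^sup>2
      = c\<^sup>2 * ((cos u)\<^sup>2 * ((sin v)\<^sup>2 + (cos v)\<^sup>2) + (sin u)\<^sup>2)"
    by algebra
  ultimately show ?thesis
    by (simp add: norm_eq_sqrt_inner inner_vec3 flip: power2_eq_square)
qed

lemma energy_Psi_segment:
  "energy \<alpha> (\<lambda>t. Psi (a + t * c) v) =
    (\<integral>\<^sup>+ t. indicator {0..1} t * ennreal (arccos (cos (a + t * c)) powr \<alpha> * \<bar>c\<bar>) \<partial>lborel)"
  by (simp add: energy_def norm_vector_derivative_Psi_segment sdistN_def inner_Psi_NP)

lemma ray_segment_minimizes_energy:
  assumes u1: "u1 \<in> {0..pi}" and u2: "u2 \<in> {0..pi}"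
    and adm: "admissible \<gamma> (Psi u1 v0) (Psi u2 v0)"
  shows "energy \<alpha> (\<lambda>t. Psi (u1 + t * (u2 - u1)) v0) \<le> energy \<alpha> \<gamma>"
proof -
  have "energy \<alpha> (\<lambda>t. Psi (u1 + t * (u2 - u1)) v0) = (\<integral>\<^sup>+ t. indicator {0..1} t *
      ennreal ((u1 + t * (u2 - u1)) powr \<alpha> * \<bar>u2 - u1\<bar>) \<partial>lborel)"
    unfolding energy_Psi_segment
    using segment_mem_atLeastAtMost[OF _ u1 u2]
    by (intro nn_integral_cong) (auto simp: indicator_def arccos_cos)
  also have "\<dots> \<le> energy \<alpha> \<gamma>"
  proof (rule segment_weight_le_energy[OF _ _ norm_NP _ adm])
    show "continuous_on {0<..<pi} (\<lambda>s. s powr \<alpha>)"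
      by (intro continuous_intros) auto
  qed (use u1 u2 in \<open>auto simp: sdistN_def inner_Psi_NP arccos_cos\<close>)
  finally show ?thesis .
qed

lemma geodesic_through_NP_minimizes_energy:
  assumes \<alpha>: "0 < \<alpha>" and u1: "0 \<le> u1" and u2: "0 \<le> u2" and L: "u1 + u2 \<le> pi"
    and adm: "admissible \<gamma> (Psi u1 v0) (Psi u2 (v0 + pi))"
  shows "energy \<alpha> (\<lambda>t. Psi (t * (u1 + u2) - u1) (v0 + pi)) \<le> energy \<alpha> \<gamma>"
proof -
  define P where "P = Psi u1 v0"
  have arccos_P_NP: "arccos (P \<bullet> NP) = u1"
    using u1 u2 L by (simp add: P_def inner_Psi_NP arccos_cos)
  have "energy \<alpha> (\<lambda>t. Psi (t * (u1 + u2) - u1) (v0 + pi)) = (\<integral>\<^sup>+ t. indicator {0..1} t *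
      ennreal (\<bar>0 + t * (u1 + u2 - 0) - u1\<bar> powr \<alpha> * \<bar>u1 + u2 - 0\<bar>) \<partial>lborel)"
  proof -
    have "arccos (cos (- u1 + t * (u1 + u2))) = \<bar>0 + t * (u1 + u2 - 0) - u1\<bar>"
      if "t \<in> {0..1}" for t
    proof -
      have "0 \<le> t * (u1 + u2)" "t * (u1 + u2) \<le> u1 + u2"
        using that u1 u2 mult_left_le_one_le[of "u1 + u2" t] by auto
      then have "\<bar>- u1 + t * (u1 + u2)\<bar> \<le> pi"
        using u1 u2 L unfolding abs_le_iff by linarith
      then show ?thesis by (simp add: arccos_cos_abs algebra_simps)
    qed
    then show ?thesis
      using energy_Psi_segment[of \<alpha> "- u1" "u1 + u2" "v0 + pi"]
      by (auto simp: algebra_simps indicator_def intro!: nn_integral_cong)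
  qed
  also have "\<dots> \<le> energy \<alpha> \<gamma>"
  proof (rule segment_weight_le_energy[where P = P, OF _ _ _ _ adm])
    show "continuous_on {0<..<pi} (\<lambda>s. \<bar>s - u1\<bar> powr \<alpha>)"
      using \<alpha> by (auto intro!: continuous_intros continuous_on_powr')
    show "\<bar>arccos (x \<bullet> P) - u1\<bar> powr \<alpha> \<le> sdistN x powr \<alpha>" if "norm x = 1" for x
    proof -
      have "norm P = 1" by (simp add: P_def)
      moreover have "arccos (NP \<bullet> P) = u1" "arccos (P \<bullet> x) = arccos (x \<bullet> P)"
        using arccos_P_NP by (simp_all add: inner_commute)
      ultimately have "\<bar>arccos (x \<bullet> P) - u1\<bar> \<le> arccos (x \<bullet> NP)"
        using arccos_inner_triangle[OF that norm_NP, of P] arccos_inner_triangle[of P x NP] that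
          arccos_P_NP by (simp add: abs_le_iff)
      then show ?thesis
        using \<alpha> by (simp add: sdistN_def powr_mono2)
    qed
    have "Psi u2 (v0 + pi) \<bullet> P = cos (u1 + u2)"
      by (simp add: P_def inner_Psi cos_add algebra_simps)
    then show "arccos (Psi u2 (v0 + pi) \<bullet> P) = u1 + u2"
      using u1 u2 L by (simp add: arccos_cos)
  qed (use u1 in \<open>auto simp: P_def\<close>)
  finally show ?thesis .
qed

theorem theorem3p7:
  fixes \<alpha> :: real
  assumes "\<alpha> \<noteq> 0"
  shows "(\<forall>u1 u2 v0 \<gamma>. u1 \<in> {0..pi} \<and> u2 \<in> {0..pi} \<and> admissible \<gamma> (Psi u1 v0) (Psi u2 v0) \<longrightarrow>
            energy \<alpha> (\<lambda>t. Psi (u1 + t * (u2 - u1)) v0) \<le> energy \<alpha> \<gamma>)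
       \<and> (\<alpha> > 0 \<longrightarrow>
          (\<forall>u1 u2 v0 \<gamma>. 0 \<le> u1 \<and> 0 \<le> u2 \<and> u1 + u2 \<le> pi \<and>
               admissible \<gamma> (Psi u1 v0) (Psi u2 (v0 + pi)) \<longrightarrow>
            energy \<alpha> (\<lambda>t. Psi (t * (u1 + u2) - u1) (v0 + pi)) \<le> energy \<alpha> \<gamma>))"
  using ray_segment_minimizes_energy geodesic_through_NP_minimizes_energy by blast

end
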